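(* Let $n$ be even and let $G$ be a bipartite graph with parts $V_1=\{v^1_1,\dots,v^1_n\}$ and $V_2=\{v^2_1,\dots,v^2_n\}$, with maximum matching size $\alpha(G)$. Let $G'$ be the graph on vertex set $V_0\cup V_1\cup V_2\cup V_3\cup V_4$, where $V_0=\{v^0_1,\dots,v^0_{n/2}\}$, $V_3=\{v^3_1,\dots,v^3_n\}$, $V_4=\{v^4_1,\dots,v^4_{n/2}\}$ are new vertices, with edge set consisting of: $v^0_i v^1_{2i-1}$ and $v^0_i v^1_{2i}$ for all $i\in[n/2]$; all edges of $G$ between $V_1$ and $V_2$; $v^2_i v^3_i$ for all $i\in[n]$; and $v^3_i v^4_j$ for all $i\in[n]$, $j\in[n/2]$. Then (a) for every matching $M$ of $G$ there is a TSP tour of $G'$ of $(1,2)$-cost at most $5n-|M|$, and (b) every TSP tour of $G'$ has $(1,2)$-cost at least $5n-\alpha(G)$. Consequently the optimal $(1,2)$-TSP cost of $G'$ (which has $4n$ vertices) equals $5n-\alpha(G)$.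
   Context: For a graph $F=(V,E)$, the $(1,2)$-cost of a TSP tour (a cyclic ordering $(v_1,\dots,v_N)$ of $V$) is $\sum_{i=1}^N D(v_i,v_{i+1})$ with $v_{N+1}=v_1$, where $D(u,v)=1$ if $uv\in E$ and $D(u,v)=2$ otherwise; the optimal $(1,2)$-TSP cost is the minimum over tours. *)

theory Defs
  imports Main
begin

definition D12 :: "('v \<Rightarrow> 'v \<Rightarrow> bool) \<Rightarrow> 'v \<Rightarrow> 'v \<Rightarrow> nat" where
  "D12 Ed u v = (if Ed u v then 1 else 2)"

text \<open>A TSP tour of vertex set V: a cyclic ordering, represented by a list enumerating V once.\<close>
definition is_tour :: "'v set \<Rightarrow> 'v list \<Rightarrow> bool" where
  "is_tour V xs \<longleftrightarrow> distinct xs \<and> set xs = V"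

definition tour_cost :: "('v \<Rightarrow> 'v \<Rightarrow> bool) \<Rightarrow> 'v list \<Rightarrow> nat" where
  "tour_cost Ed xs = (\<Sum>i<length xs. D12 Ed (xs ! i) (xs ! ((i + 1) mod length xs)))"

definition opt_tsp :: "'v set \<Rightarrow> ('v \<Rightarrow> 'v \<Rightarrow> bool) \<Rightarrow> nat" where
  "opt_tsp V Ed = Min {tour_cost Ed xs | xs. is_tour V xs}"

text \<open>G is given by E :: nat => nat => bool, where E i j means v^1_i v^2_j is an edge
  (only i, j in {1..n} are relevant). A matching is a set of pairs (i,j) of edges,
  pairwise vertex-disjoint.\<close>
definition bip_matching :: "nat \<Rightarrow> (nat \<Rightarrow> nat \<Rightarrow> bool) \<Rightarrow> (nat \<times> nat) set \<Rightarrow> bool" where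
  "bip_matching n E M \<longleftrightarrow>
     M \<subseteq> {(i, j). i \<in> {1..n} \<and> j \<in> {1..n} \<and> E i j} \<and>
     (\<forall>(i, j) \<in> M. \<forall>(i', j') \<in> M. (i, j) \<noteq> (i', j') \<longrightarrow> i \<noteq> i' \<and> j \<noteq> j')"

definition max_matching :: "nat \<Rightarrow> (nat \<Rightarrow> nat \<Rightarrow> bool) \<Rightarrow> nat" where
  "max_matching n E = Max {card M | M. bip_matching n E M}"

text \<open>Vertex v^k_i is encoded as the pair (k, i).\<close>
definition Gp_verts :: "nat \<Rightarrow> (nat \<times> nat) set" where
  "Gp_verts n = ({0, 4} \<times> {1..n div 2}) \<union> ({1, 2, 3} \<times> {1..n})"

fun Gp_base :: "nat \<Rightarrow> (nat \<Rightarrow> nat \<Rightarrow> bool) \<Rightarrow> nat \<times> nat \<Rightarrow> nat \<times> nat \<Rightarrow> bool" where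
  "Gp_base n E (a, i) (b, j) =
     ((a = 0 \<and> b = 1 \<and> i \<in> {1..n div 2} \<and> (j = 2 * i - 1 \<or> j = 2 * i)) \<or>
      (a = 1 \<and> b = 2 \<and> i \<in> {1..n} \<and> j \<in> {1..n} \<and> E i j) \<or>
      (a = 2 \<and> b = 3 \<and> i \<in> {1..n} \<and> j = i) \<or>
      (a = 3 \<and> b = 4 \<and> i \<in> {1..n} \<and> j \<in> {1..n div 2}))"

definition Gp_edge :: "nat \<Rightarrow> (nat \<Rightarrow> nat \<Rightarrow> bool) \<Rightarrow> nat \<times> nat \<Rightarrow> nat \<times> nat \<Rightarrow> bool" where
  "Gp_edge n E u v \<longleftrightarrow> Gp_base n E u v \<or> Gp_base n E v u"

end

theory Submission
  imports Defs
begin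

text \<open>Upper bound: extend the matching \<open>M\<close> to a bijection \<open>\<sigma>\<close> between \<open>V\<^sub>1\<close> and \<open>V\<^sub>2\<close> and
  walk through \<open>n/2\<close> blocks \<open>v\<^sup>0\<^sub>i, v\<^sup>1\<^sub>2\<^sub>i, v\<^sup>2, v\<^sup>3, v\<^sup>4\<^sub>i, v\<^sup>3, v\<^sup>2, v\<^sup>1\<^sub>2\<^sub>i\<^sub>+\<^sub>1\<close> (indices of \<open>V\<^sub>1\<close> cyclic),
  using \<open>\<sigma>\<close> between \<open>V\<^sub>1\<close> and \<open>V\<^sub>2\<close>. All \<open>4n\<close> steps are edges except the \<open>V\<^sub>1\<close>-\<open>V\<^sub>2\<close> steps at the
  \<open>n - |M|\<close> unmatched vertices, so the cost is at most \<open>5n - |M|\<close>.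

  Lower bound: a tour costs \<open>8n\<close> minus the number of its steps along edges of \<open>G'\<close>; we show there are
  at most \<open>3n + \<alpha>(G)\<close> such steps. Steps at \<open>V\<^sub>4\<close> number at most \<open>2|V\<^sub>4| = n\<close>. A vertex of \<open>V\<^sub>1\<close>
  (of \<open>V\<^sub>2\<close>) lies on at most two steps and has a single neighbour in \<open>V\<^sub>0\<close> (in \<open>V\<^sub>3\<close>), so it carries
  a \<open>V\<^sub>0\<close>-step (\<open>V\<^sub>3\<close>-step) only if it carries fewer than two \<open>V\<^sub>1\<close>-\<open>V\<^sub>2\<close> steps, and then just one.
  Finally the \<open>V\<^sub>1\<close>-\<open>V\<^sub>2\<close> steps form a subgraph of \<open>G\<close> of maximum degree 2, which contains a
  matching missing at most one of its edges per vertex of degree 2.\<close>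

definition tour_succ :: "'a list \<Rightarrow> nat \<Rightarrow> 'a" where
  "tour_succ xs i = xs ! ((i + 1) mod length xs)"

definition steps_at :: "'a list \<Rightarrow> 'a \<Rightarrow> nat set" where
  "steps_at xs v = {i. i < length xs \<and> (xs ! i = v \<or> tour_succ xs i = v)}"

lemma finite_steps_at [simp]: "finite (steps_at xs v)"
  by (simp add: steps_at_def)

lemma Suc_mod_eq_if: "i < N \<Longrightarrow> (i + 1) mod N = (if i + 1 = N then 0 else i + (1::nat))"
  by (simp add: Suc_lessI)

lemma Suc_mod_inj:
  assumes "i < N" "j < N" "(i + 1) mod N = (j + 1) mod (N::nat)"
  shows "i = j"
  using assms(3) unfolding Suc_mod_eq_if[OF assms(1)] Suc_mod_eq_if[OF assms(2)]
  by (auto split: if_splits)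

lemma tour_succ_eq_nth_iff:
  assumes "distinct xs" "i < length xs" "j < length xs"
  shows "tour_succ xs i = xs ! j \<longleftrightarrow> j = (i + 1) mod length xs"
proof -
  have "(i + 1) mod length xs < length xs" using assms(2) by (auto intro: mod_less_divisor)
  then show ?thesis
    using nth_eq_iff_index_eq[OF assms(1) _ assms(3)] by (auto simp: tour_succ_def)
qed

lemma card_steps_at_le:
  assumes "distinct xs"
  shows "card (steps_at xs v) \<le> 2"
proof -
  let ?A = "{i. i < length xs \<and> xs ! i = v}" and ?B = "{i. i < length xs \<and> tour_succ xs i = v}"
  have "card ?A \<le> 1"
    using nth_eq_iff_index_eq[OF assms] by (auto simp: card_le_Suc0_iff_eq)
  moreover have "card ?B \<le> 1"
  proof -
    have "i = j" if "i < length xs" "j < length xs" "tour_succ xs i = tour_succ xs j" for i j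
    proof -
      have "(i + 1) mod length xs < length xs" "(j + 1) mod length xs < length xs"
        using that(1,2) by (auto intro: mod_less_divisor)
      then show ?thesis
        using that Suc_mod_inj[OF that(1,2)] nth_eq_iff_index_eq[OF assms] by (simp add: tour_succ_def)
    qed
    then show ?thesis by (auto simp: card_le_Suc0_iff_eq)
  qed
  moreover have "steps_at xs v = ?A \<union> ?B"
    by (auto simp: steps_at_def)
  then have "card (steps_at xs v) \<le> card ?A + card ?B"
    by (simp only: card_Un_le)
  ultimately show ?thesis by linarith
qed

text \<open>Two distinct steps joining the same pair of vertices would go back and forth,
  which is impossible on a cycle of length at least 3.\<close>
lemma card_steps_between_le:
  assumes "distinct xs" "3 \<le> length xs" "v \<noteq> y"
  shows "card (steps_at xs v \<inter> steps_at xs y) \<le> 1"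
proof -
  let ?N = "length xs"
  have "i = j" if i: "i \<in> steps_at xs v \<inter> steps_at xs y" and j: "j \<in> steps_at xs v \<inter> steps_at xs y" for i j
  proof (rule ccontr)
    assume "i \<noteq> j"
    have ij: "i < ?N" "j < ?N" using i j by (auto simp: steps_at_def)
    then have "xs ! i \<noteq> xs ! j" using \<open>i \<noteq> j\<close> assms(1) by (simp add: nth_eq_iff_index_eq)
    then have "tour_succ xs i = xs ! j \<and> tour_succ xs j = xs ! i"
      using i j assms(3) by (auto simp: steps_at_def)
    then have j_succ: "j = (i + 1) mod ?N" and i_succ: "i = (j + 1) mod ?N"
      using tour_succ_eq_nth_iff[OF assms(1)] ij by blast+
    have "(j = 0 \<and> i + 1 = ?N) \<or> j = i + 1"
      using j_succ unfolding Suc_mod_eq_if[OF ij(1)] by (simp split: if_split_asm)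
    moreover have "(i = 0 \<and> j + 1 = ?N) \<or> i = j + 1"
      using i_succ unfolding Suc_mod_eq_if[OF ij(2)] by (simp split: if_split_asm)
    ultimately show False using assms(2) by presburger
  qed
  then show ?thesis by (auto simp: card_le_Suc0_iff_eq)
qed

lemma card_Int_steps_at_less_2:
  assumes "distinct xs" "i \<in> steps_at xs v" "i \<notin> S"
  shows "card (S \<inter> steps_at xs v) < 2"
proof -
  have "card (insert i (S \<inter> steps_at xs v)) \<le> card (steps_at xs v)"
    using assms(2) by (intro card_mono) auto
  moreover have "card (insert i (S \<inter> steps_at xs v)) = card (S \<inter> steps_at xs v) + 1"
    using assms(3) by simp
  ultimately show ?thesis using card_steps_at_le[OF assms(1), of v] by linarith
qed

lemma card_steps_to_partners_le:
  assumes "distinct xs" "3 \<le> length xs" "finite Q" "\<And>v. v \<in> Q \<Longrightarrow> p v \<noteq> v"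
  shows "card (\<Union>v\<in>Q. steps_at xs v \<inter> steps_at xs (p v)) \<le> card Q"
proof -
  have "card (\<Union>v\<in>Q. steps_at xs v \<inter> steps_at xs (p v)) \<le> (\<Sum>v\<in>Q. card (steps_at xs v \<inter> steps_at xs (p v)))"
    using assms(3) by (rule card_UN_le)
  also have "\<dots> \<le> (\<Sum>v\<in>Q. 1)"
    by (rule sum_mono, rule card_steps_between_le[OF assms(1,2)]) (use assms(4) in fastforce)
  finally show ?thesis by simp
qed

lemma sum_1_2_add_card:
  "(\<Sum>i<L. if P i then 1 else 2::nat) + card {i. i < L \<and> P i} = 2 * L"
proof (induction L)
  case (Suc L)
  have "{i. i < Suc L \<and> P i} = (if P L then insert L {i. i < L \<and> P i} else {i. i < L \<and> P i})"
    by (auto simp: less_Suc_eq)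
  with Suc show ?case by auto
qed simp

lemma tour_cost_add_card_edge_steps:
  "tour_cost Ed xs + card {i. i < length xs \<and> Ed (xs ! i) (tour_succ xs i)} = 2 * length xs"
  unfolding tour_cost_def D12_def tour_succ_def using sum_1_2_add_card by simp

lemma tour_cost_le_length_add_card:
  assumes "\<And>i. i < length xs \<Longrightarrow> i \<notin> S \<Longrightarrow> Ed (xs ! i) (tour_succ xs i)" "finite S"
  shows "tour_cost Ed xs \<le> length xs + card S"
proof -
  let ?F = "{i. i < length xs \<and> Ed (xs ! i) (tour_succ xs i)}"
  have "{..<length xs} \<subseteq> ?F \<union> S"
    using assms(1) by auto
  then have "card {..<length xs} \<le> card (?F \<union> S)"
    using assms(2) by (intro card_mono) auto
  also have "\<dots> \<le> card ?F + card S" by (rule card_Un_le)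
  finally show ?thesis using tour_cost_add_card_edge_steps[of Ed xs] by simp
qed

lemma tour_cost_le: "tour_cost Ed xs \<le> 2 * length xs"
  using tour_cost_add_card_edge_steps[of Ed xs] by linarith

lemma opt_tsp_eqI:
  assumes "is_tour V xs" "tour_cost Ed xs \<le> c"
    and "\<And>ys. is_tour V ys \<Longrightarrow> c \<le> tour_cost Ed ys"
  shows "opt_tsp V Ed = c"
proof -
  let ?T = "{tour_cost Ed ys | ys. is_tour V ys}"
  have "?T \<subseteq> {..2 * card V}"
    using tour_cost_le by (auto simp: is_tour_def distinct_card)
  then have "finite ?T" by (rule finite_subset) simp
  moreover have "c \<le> t" if "t \<in> ?T" for t using that assms(3) by auto
  moreover have "tour_cost Ed xs = c" using assms(2) assms(3)[OF assms(1)] by (rule antisym)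
  then have "c \<in> ?T" using assms(1) by blast
  ultimately show ?thesis unfolding opt_tsp_def by (rule Min_eqI)
qed

section \<open>Bipartite multigraphs of maximum degree 2\<close>

definition repeated_values :: "('i \<Rightarrow> 'a) \<Rightarrow> 'i set \<Rightarrow> 'a set" where
  "repeated_values u B = {a. 2 \<le> card {i \<in> B. u i = a}}"

lemma finite_repeated_values:
  assumes "finite B"
  shows "finite (repeated_values u B)"
proof (rule finite_subset)
  show "repeated_values u B \<subseteq> u ` B"
  proof
    fix a assume "a \<in> repeated_values u B"
    then have "2 \<le> card {i \<in> B. u i = a}" by (simp add: repeated_values_def)
    then have "{i \<in> B. u i = a} \<noteq> {}" by (intro notI) simp
    then show "a \<in> u ` B" by auto
  qed
qed (use assms in simp)

text \<open>A removed fibre of size 2 takes its repeated value with it.\<close>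
lemma card_repeated_values_remove_fibre:
  assumes "finite B" "\<And>a. card {i \<in> B. u i = a} \<le> 2" "i0 \<in> B" "B' \<subseteq> {i \<in> B. u i \<noteq> u i0}"
  shows "card (repeated_values u B') + card {i \<in> B. u i = u i0} \<le> card (repeated_values u B) + 1"
proof -
  let ?R = "repeated_values u B" and ?F = "{i \<in> B. u i = u i0}"
  have fin: "finite ?R" using assms(1) by (rule finite_repeated_values)
  have sub: "repeated_values u B' \<subseteq> ?R - {u i0}"
  proof
    fix a assume "a \<in> repeated_values u B'"
    then have a: "2 \<le> card {i \<in> B'. u i = a}" by (simp add: repeated_values_def)
    have "card {i \<in> B'. u i = a} \<le> card {i \<in> B. u i = a}"
      using assms(1,4) by (intro card_mono) auto
    with a have "a \<in> ?R" by (simp add: repeated_values_def)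
    moreover have "{i \<in> B'. u i = a} \<noteq> {}" using a by (intro notI) simp
    then have "a \<noteq> u i0" using assms(4) by auto
    ultimately show "a \<in> ?R - {u i0}" by simp
  qed
  have "0 < card ?F" using assms(1,3) by (auto simp: card_gt_0_iff)
  show ?thesis
  proof (cases "card ?F = 2")
    case True
    then have "u i0 \<in> ?R" by (simp add: repeated_values_def)
    have "card (repeated_values u B') \<le> card (?R - {u i0})"
      using sub fin by (intro card_mono) auto
    moreover have "0 < card ?R" using fin \<open>u i0 \<in> ?R\<close> by (auto simp: card_gt_0_iff)
    ultimately show ?thesis using True \<open>u i0 \<in> ?R\<close> fin by simp
  next
    case False
    with \<open>0 < card ?F\<close> assms(2)[of "u i0"] have "card ?F = 1" by linarith
    moreover have "card (repeated_values u B') \<le> card ?R"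
      using sub fin by (intro card_mono) auto
    ultimately show ?thesis by linarith
  qed
qed

text \<open>\<open>B\<close> indexes the edges of a bipartite multigraph with endpoint maps \<open>u\<close> and \<open>w\<close>.\<close>
lemma degree_le_2_matching:
  fixes u :: "'i \<Rightarrow> 'a" and w :: "'i \<Rightarrow> 'b"
  assumes "finite B" "\<And>a. card {i \<in> B. u i = a} \<le> 2" "\<And>b. card {i \<in> B. w i = b} \<le> 2"
  shows "\<exists>M \<subseteq> B. inj_on u M \<and> inj_on w M \<and>
           card B \<le> card M + card (repeated_values u B) + card (repeated_values w B)"
  using assms
proof (induction "card B" arbitrary: B rule: less_induct)
  case less
  show ?case
  proof (cases "B = {}")
    case False
    then obtain i0 where i0: "i0 \<in> B" by auto
    let ?U = "{i \<in> B. u i = u i0}" and ?W = "{i \<in> B. w i = w i0}"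
    define B' where "B' = {i \<in> B. u i \<noteq> u i0 \<and> w i \<noteq> w i0}"
    have "finite B'" using less.prems(1) by (simp add: B'_def)
    have "B' \<subset> B" using i0 by (auto simp: B'_def)
    then have "card B' < card B" by (rule psubset_card_mono[OF less.prems(1)])
    moreover have fibres: "card {i \<in> B'. u i = a} \<le> 2" "card {i \<in> B'. w i = b} \<le> 2" for a b
    proof -
      have "card {i \<in> B'. u i = a} \<le> card {i \<in> B. u i = a}"
        using less.prems(1) by (intro card_mono) (simp, force simp: B'_def)
      moreover have "card {i \<in> B'. w i = b} \<le> card {i \<in> B. w i = b}"
        using less.prems(1) by (intro card_mono) (simp, force simp: B'_def)
      ultimately
      show "card {i \<in> B'. u i = a} \<le> 2" "card {i \<in> B'. w i = b} \<le> 2"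
        using less.prems(2)[of a] less.prems(3)[of b] by linarith+
    qed
    ultimately obtain M' where M': "M' \<subseteq> B'" "inj_on u M'" "inj_on w M'"
      "card B' \<le> card M' + card (repeated_values u B') + card (repeated_values w B')"
      using less.hyps[OF _ \<open>finite B'\<close> fibres] by blast
    have "card (repeated_values u B') + card ?U \<le> card (repeated_values u B) + 1"
      by (rule card_repeated_values_remove_fibre[OF less.prems(1,2) i0]) (auto simp: B'_def)
    moreover have "card (repeated_values w B') + card ?W \<le> card (repeated_values w B) + 1"
      by (rule card_repeated_values_remove_fibre[OF less.prems(1,3) i0]) (auto simp: B'_def)
    moreover have "card B + 1 \<le> card B' + card ?U + card ?W"
    proof -
      have "finite ?U" "finite ?W" using less.prems(1) by simp_all
      have "card B \<le> card (B' \<union> (?U \<union> ?W))"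
        using less.prems(1) by (intro card_mono) (auto simp: B'_def)
      also have "\<dots> \<le> card B' + card (?U \<union> ?W)" by (rule card_Un_le)
      finally have "card B \<le> card B' + card (?U \<union> ?W)" .
      moreover have "card (?U \<union> ?W) + card (?U \<inter> ?W) = card ?U + card ?W"
        using \<open>finite ?U\<close> \<open>finite ?W\<close> by (rule card_Un_Int[symmetric])
      moreover have "0 < card (?U \<inter> ?W)"
        using i0 less.prems(1) by (auto simp: card_gt_0_iff)
      ultimately show ?thesis by linarith
    qed
    moreover have "card (insert i0 M') = card M' + 1"
      using M'(1) \<open>finite B'\<close> by (subst card_insert_disjoint) (auto simp: B'_def intro: finite_subset)
    ultimately have "card B \<le> card (insert i0 M') + card (repeated_values u B) + card (repeated_values w B)"
      using M'(4) by linarith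
    moreover have "inj_on u (insert i0 M')" "inj_on w (insert i0 M')"
      using M'(1-3) by (auto simp: B'_def)
    moreover have "insert i0 M' \<subseteq> B" using M'(1) i0 by (auto simp: B'_def)
    ultimately show ?thesis by blast
  qed simp
qed

lemma bip_matching_subset: "bip_matching n E M \<Longrightarrow> M \<subseteq> {1..n} \<times> {1..n}"
  unfolding bip_matching_def by auto

lemma bip_matching_finite_cards: "finite {card M | M. bip_matching n E M}"
proof -
  have "{card M | M. bip_matching n E M} \<subseteq> card ` Pow ({1..n} \<times> {1..n})"
    using bip_matching_subset by blast
  then show ?thesis by (rule finite_subset) simp
qed

lemma card_le_max_matching: "bip_matching n E M \<Longrightarrow> card M \<le> max_matching n E"
  unfolding max_matching_def by (rule Max_ge[OF bip_matching_finite_cards]) auto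

lemma max_matching_attained: "\<exists>M. bip_matching n E M \<and> card M = max_matching n E"
proof -
  have "bip_matching n E {}" by (simp add: bip_matching_def)
  then have "{card M | M. bip_matching n E M} \<noteq> {}" by auto
  from Max_in[OF bip_matching_finite_cards this] show ?thesis
    unfolding max_matching_def by auto
qed

lemma bip_matching_imageI:
  assumes "inj_on a M" "inj_on b M" "\<And>i. i \<in> M \<Longrightarrow> a i \<in> {1..n} \<and> b i \<in> {1..n} \<and> E (a i) (b i)"
  shows "bip_matching n E ((\<lambda>i. (a i, b i)) ` M)"
  using assms unfolding bip_matching_def inj_on_def by fastforce

lemma bip_matching_unique:
  "bip_matching n E M \<Longrightarrow> (a, b) \<in> M \<Longrightarrow> (a', b') \<in> M \<Longrightarrow> a = a' \<or> b = b' \<Longrightarrow> a = a' \<and> b = b'"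
  unfolding bip_matching_def by fastforce

lemma bip_matching_edge: "bip_matching n E M \<Longrightarrow> (a, b) \<in> M \<Longrightarrow> E a b"
  unfolding bip_matching_def by auto

lemma card_Domain_bip_matching: "bip_matching n E M \<Longrightarrow> card (Domain M) = card M"
  unfolding Domain_fst by (rule card_image, rule inj_onI) (auto dest: bip_matching_unique)

lemma card_Range_bip_matching: "bip_matching n E M \<Longrightarrow> card (Range M) = card M"
  unfolding Range_snd by (rule card_image, rule inj_onI) (auto dest: bip_matching_unique)

lemma bip_matching_extends_to_injection:
  assumes M: "bip_matching n E M"
  obtains \<sigma> where "\<sigma> ` {1..n} \<subseteq> {1..n}" "inj_on \<sigma> {1..n}" "\<And>a b. (a, b) \<in> M \<Longrightarrow> \<sigma> a = b"
proof -
  have MS: "M \<subseteq> {1..n} \<times> {1..n}" using M by (rule bip_matching_subset)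
  then have "Domain M \<subseteq> {1..n}" "Range M \<subseteq> {1..n}" by auto
  moreover have "finite (Domain M)" "finite (Range M)"
    using finite_subset[OF MS] by (simp_all add: finite_Domain finite_Range)
  ultimately have "card ({1..n} - Domain M) = card ({1..n} - Range M)"
    using M by (simp add: card_Diff_subset card_Domain_bip_matching card_Range_bip_matching)
  then obtain g where g: "bij_betw g ({1..n} - Domain M) ({1..n} - Range M)"
    using finite_same_card_bij by blast
  define \<sigma> where "\<sigma> a = (if a \<in> Domain M then (THE b. (a, b) \<in> M) else g a)" for a
  have \<sigma>M: "\<sigma> a = b" if "(a, b) \<in> M" for a b
    using that bip_matching_unique[OF M that] by (auto simp: \<sigma>_def intro: the_equality)
  have \<sigma>_in_Range_iff: "\<sigma> a \<in> Range M \<longleftrightarrow> a \<in> Domain M" if "a \<in> {1..n}" for a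
  proof
    assume "a \<in> Domain M"
    then obtain b where "(a, b) \<in> M" by blast
    then show "\<sigma> a \<in> Range M" unfolding \<sigma>M[OF \<open>(a, b) \<in> M\<close>] by blast
  next
    assume "\<sigma> a \<in> Range M"
    then show "a \<in> Domain M" using that g by (auto simp: \<sigma>_def bij_betw_def)
  qed
  have "\<sigma> a \<in> {1..n}" if "a \<in> {1..n}" for a
  proof (cases "a \<in> Domain M")
    case True
    then show ?thesis using \<sigma>_in_Range_iff[OF that] \<open>Range M \<subseteq> {1..n}\<close> by blast
  next
    case False
    then show ?thesis using that g by (auto simp: \<sigma>_def bij_betw_def)
  qed
  then have "\<sigma> ` {1..n} \<subseteq> {1..n}" by blast
  moreover have "inj_on \<sigma> {1..n}"
  proof (rule inj_onI)
    fix a a' assume a: "a \<in> {1..n}" "a' \<in> {1..n}" "\<sigma> a = \<sigma> a'"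
    then have "a \<in> Domain M \<longleftrightarrow> a' \<in> Domain M"
      using \<sigma>_in_Range_iff[OF a(1)] \<sigma>_in_Range_iff[OF a(2)] by simp
    then consider "a \<in> Domain M" "a' \<in> Domain M" | "a \<notin> Domain M" "a' \<notin> Domain M"
      by blast
    then show "a = a'"
    proof cases
      case 1
      then obtain b b' where b: "(a, b) \<in> M" "(a', b') \<in> M" by auto
      have "b = b'" using a(3) unfolding \<sigma>M[OF b(1)] \<sigma>M[OF b(2)] .
      then show ?thesis using bip_matching_unique[OF M b] by blast
    next
      case 2
      have "inj_on g ({1..n} - Domain M)" using g by (simp add: bij_betw_def)
      moreover have "g a = g a'" using a(3) 2 by (simp add: \<sigma>_def)
      ultimately show ?thesis by (rule inj_onD) (use 2 a(1,2) in simp_all)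
    qed
  qed
  ultimately show ?thesis using that \<sigma>M by blast
qed

lemma card_Gp_verts: "even n \<Longrightarrow> card (Gp_verts n) = 4 * n"
proof -
  assume "even n"
  have "card (Gp_verts n) = card ({0, 4::nat} \<times> {1..n div 2}) + card ({1, 2, 3::nat} \<times> {1..n})"
    unfolding Gp_verts_def by (rule card_Un_disjoint) auto
  also have "\<dots> = 4 * n" using \<open>even n\<close> by (simp add: card_cartesian_product) presburger
  finally show ?thesis .
qed

lemma Gp_verts_outer_layer: "p \<in> Gp_verts n \<Longrightarrow> fst p \<in> {0, 4} \<Longrightarrow> p \<in> {fst p} \<times> {1..n div 2}"
  by (cases p) (auto simp: Gp_verts_def)

lemma Gp_verts_inner_layer: "p \<in> Gp_verts n \<Longrightarrow> fst p \<in> {1, 2, 3} \<Longrightarrow> p \<in> {fst p} \<times> {1..n}"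
  by (cases p) (auto simp: Gp_verts_def)

lemma Gp_edge_sym: "Gp_edge n E p q \<longleftrightarrow> Gp_edge n E q p"
  unfolding Gp_edge_def by (rule disj_commute)

lemma Gp_edge_layers:
  "Gp_edge n E p q \<Longrightarrow> fst p < 4 \<and> fst q = Suc (fst p) \<or> fst q < 4 \<and> fst p = Suc (fst q)"
  by (cases p; cases q) (auto simp: Gp_edge_def)

lemma Gp_edge_1_0:
  assumes "Gp_edge n E p q" "fst p = 1" "fst q = 0"
  shows "q = (0, (snd p + 1) div 2)"
  using assms by (cases p; cases q) (auto simp: Gp_edge_def)

lemma Gp_edge_2_3:
  assumes "Gp_edge n E p q" "fst p = 2" "fst q = 3"
  shows "q = (3, snd p)"
  using assms by (cases p; cases q) (auto simp: Gp_edge_def)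

lemma Gp_edge_1_2:
  assumes "Gp_edge n E p q" "fst p = 1" "fst q = 2"
  shows "E (snd p) (snd q)"
  using assms by (cases p; cases q) (auto simp: Gp_edge_def)

section \<open>Lower bound\<close>

lemma card_filter_add_card_filter_not:
  "finite A \<Longrightarrow> card {x \<in> A. P x} + card {x \<in> A. \<not> P x} = card A"
  by (subst card_Un_disjoint[symmetric]) (auto intro: arg_cong[where f = card])

locale Gp_tour =
  fixes n :: nat and E :: "nat \<Rightarrow> nat \<Rightarrow> bool" and xs :: "(nat \<times> nat) list"
  assumes even_n: "even n" and n_ne_0: "n \<noteq> 0" and tour: "is_tour (Gp_verts n) xs"
begin

lemma distinct_xs: "distinct xs"
  using tour by (simp add: is_tour_def)

lemma length_xs: "length xs = 4 * n"
proof -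
  have "length xs = card (set xs)" by (rule distinct_card[OF distinct_xs, symmetric])
  also have "\<dots> = 4 * n" using tour card_Gp_verts[OF even_n] by (simp add: is_tour_def)
  finally show ?thesis .
qed

lemma three_le_length_xs: "3 \<le> length xs"
  using length_xs n_ne_0 by linarith

lemma nth_in_Gp_verts: "i < length xs \<Longrightarrow> xs ! i \<in> Gp_verts n"
  using tour nth_mem unfolding is_tour_def by blast

lemma tour_succ_in_Gp_verts: "tour_succ xs i \<in> Gp_verts n"
  unfolding tour_succ_def using three_le_length_xs by (intro nth_in_Gp_verts mod_less_divisor) linarith

definition edge_steps :: "nat set" where
  "edge_steps = {i. i < length xs \<and> Gp_edge n E (xs ! i) (tour_succ xs i)}"

definition layer_steps :: "nat \<Rightarrow> nat set" where
  "layer_steps k = {i \<in> edge_steps. {fst (xs ! i), fst (tour_succ xs i)} = {k, Suc k}}"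

definition endpoint :: "nat \<Rightarrow> nat \<Rightarrow> nat \<times> nat" where
  "endpoint k i = (if fst (xs ! i) = k then xs ! i else tour_succ xs i)"

definition deg12 :: "nat \<times> nat \<Rightarrow> nat" where
  "deg12 v = card (layer_steps 1 \<inter> steps_at xs v)"

lemma finite_layer_steps: "finite (layer_steps k)"
  by (simp add: layer_steps_def edge_steps_def)

lemma edge_steps_subset: "edge_steps \<subseteq> layer_steps 0 \<union> layer_steps 1 \<union> layer_steps 2 \<union> layer_steps 3"
proof
  fix i assume i: "i \<in> edge_steps"
  then have "fst (xs ! i) < 4 \<and> fst (tour_succ xs i) = Suc (fst (xs ! i)) \<or>
      fst (tour_succ xs i) < 4 \<and> fst (xs ! i) = Suc (fst (tour_succ xs i))"
    by (intro Gp_edge_layers[of n E]) (simp add: edge_steps_def)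
  then obtain k where "k < 4" "{fst (xs ! i), fst (tour_succ xs i)} = {k, Suc k}"
    by (metis insert_commute)
  with i show "i \<in> layer_steps 0 \<union> layer_steps 1 \<union> layer_steps 2 \<union> layer_steps 3"
    by (auto simp: layer_steps_def less_Suc_eq numeral_eq_Suc)
qed

lemma layer_steps_less_length: "i \<in> layer_steps k \<Longrightarrow> i < length xs"
  by (simp add: layer_steps_def edge_steps_def)

lemma endpoint_in_steps_at: "i < length xs \<Longrightarrow> i \<in> steps_at xs (endpoint k i)"
  by (simp add: steps_at_def endpoint_def)

lemma
  assumes "i \<in> layer_steps k" "j \<in> {k, Suc k}"
  shows fst_endpoint: "fst (endpoint j i) = j"
    and endpoint_in_Gp_verts: "endpoint j i \<in> Gp_verts n"
    and endpoint_eq_iff: "fst v = j \<Longrightarrow> endpoint j i = v \<longleftrightarrow> i \<in> steps_at xs v"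
proof -
  have i: "i < length xs" "{fst (xs ! i), fst (tour_succ xs i)} = {k, Suc k}"
    using assms(1) by (auto simp: layer_steps_def edge_steps_def)
  then have "fst (xs ! i) \<noteq> fst (tour_succ xs i)" "j \<in> {fst (xs ! i), fst (tour_succ xs i)}"
    using assms(2) by (auto simp: doubleton_eq_iff)
  then show fst: "fst (endpoint j i) = j" and
    "fst v = j \<Longrightarrow> endpoint j i = v \<longleftrightarrow> i \<in> steps_at xs v"
    using i(1) by (auto simp: endpoint_def steps_at_def)
  show "endpoint j i \<in> Gp_verts n"
    using i(1) nth_in_Gp_verts tour_succ_in_Gp_verts by (simp add: endpoint_def)
qed

lemma endpoint_in_inner_layer:
  assumes "i \<in> layer_steps k" "j \<in> {k, Suc k}" "j \<in> {1, 2, 3}"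
  shows "endpoint j i \<in> {j} \<times> {1..n}"
  using Gp_verts_inner_layer[OF endpoint_in_Gp_verts[OF assms(1,2)]] fst_endpoint[OF assms(1,2)] assms(3)
  by simp

lemma Gp_edge_endpoints:
  assumes "i \<in> layer_steps k"
  shows "Gp_edge n E (endpoint (Suc k) i) (endpoint k i)"
proof -
  have "i \<in> edge_steps" "{fst (xs ! i), fst (tour_succ xs i)} = {k, Suc k}"
    using assms by (auto simp: layer_steps_def)
  then show ?thesis
    by (auto simp: endpoint_def edge_steps_def doubleton_eq_iff Gp_edge_sym)
qed

lemma card_layer_steps_3: "card (layer_steps 3) \<le> n"
proof -
  let ?V4 = "{4::nat} \<times> {1..n div 2}"
  have "layer_steps 3 \<subseteq> (\<Union>v\<in>?V4. steps_at xs v)"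
  proof
    fix i assume i: "i \<in> layer_steps 3"
    have "endpoint 4 i \<in> ?V4"
      using Gp_verts_outer_layer[OF endpoint_in_Gp_verts[OF i]] fst_endpoint[OF i] by simp
    moreover have "i \<in> steps_at xs (endpoint 4 i)"
      using endpoint_in_steps_at[OF layer_steps_less_length[OF i]] .
    ultimately show "i \<in> (\<Union>v\<in>?V4. steps_at xs v)" by (rule UN_I)
  qed
  then have "card (layer_steps 3) \<le> card (\<Union>v\<in>?V4. steps_at xs v)"
    by (intro card_mono) auto
  also have "\<dots> \<le> (\<Sum>v\<in>?V4. card (steps_at xs v))"
    by (rule card_UN_le) simp
  also have "\<dots> \<le> (\<Sum>v\<in>?V4. 2)"
    by (rule sum_mono) (rule card_steps_at_le[OF distinct_xs])
  also have "\<dots> = n" using even_n by simp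
  finally show ?thesis .
qed

lemma deg12_endpoint_less_2:
  assumes "i \<in> layer_steps k" "k \<noteq> 1" "j \<in> {k, Suc k}"
  shows "deg12 (endpoint j i) < 2"
proof -
  have "i \<notin> layer_steps 1"
    using assms(1,2) by (auto simp: layer_steps_def doubleton_eq_iff)
  moreover have "i \<in> steps_at xs (endpoint j i)"
    using endpoint_in_steps_at[OF layer_steps_less_length[OF assms(1)]] .
  ultimately show ?thesis
    unfolding deg12_def by (rule card_Int_steps_at_less_2[OF distinct_xs, rotated])
qed

lemma card_layer_steps_0: "card (layer_steps 0) \<le> card {v \<in> {1} \<times> {1..n}. deg12 v < 2}"
proof -
  let ?Q = "{v \<in> {1} \<times> {1..n}. deg12 v < 2}" and ?p = "\<lambda>v. (0::nat, (snd v + 1) div 2)"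
  have "layer_steps 0 \<subseteq> (\<Union>v\<in>?Q. steps_at xs v \<inter> steps_at xs (?p v))"
  proof
    fix i assume i: "i \<in> layer_steps 0"
    let ?v = "endpoint 1 i"
    have "fst ?v = 1" "fst (endpoint 0 i) = 0" using fst_endpoint[OF i] by simp_all
    then have "endpoint 0 i = ?p ?v"
      using Gp_edge_1_0 Gp_edge_endpoints[OF i] by simp
    moreover have "?v \<in> ?Q"
      using endpoint_in_inner_layer[OF i, of 1] deg12_endpoint_less_2[OF i, of 1] by simp
    moreover have "i \<in> steps_at xs ?v" "i \<in> steps_at xs (endpoint 0 i)"
      using endpoint_in_steps_at[OF layer_steps_less_length[OF i]] by auto
    ultimately show "i \<in> (\<Union>v\<in>?Q. steps_at xs v \<inter> steps_at xs (?p v))"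
      by (intro UN_I[of ?v]) simp_all
  qed
  then have "card (layer_steps 0) \<le> card (\<Union>v\<in>?Q. steps_at xs v \<inter> steps_at xs (?p v))"
    by (intro card_mono) auto
  also have "\<dots> \<le> card ?Q"
    by (rule card_steps_to_partners_le[OF distinct_xs three_le_length_xs]) auto
  finally show ?thesis .
qed

lemma card_layer_steps_2: "card (layer_steps 2) \<le> card {v \<in> {2} \<times> {1..n}. deg12 v < 2}"
proof -
  let ?Q = "{v \<in> {2} \<times> {1..n}. deg12 v < 2}" and ?p = "\<lambda>v. (3::nat, snd v)"
  have "layer_steps 2 \<subseteq> (\<Union>v\<in>?Q. steps_at xs v \<inter> steps_at xs (?p v))"
  proof
    fix i assume i: "i \<in> layer_steps 2"
    let ?v = "endpoint 2 i"
    have "fst ?v = 2" "fst (endpoint 3 i) = 3" using fst_endpoint[OF i] by simp_all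
    then have "endpoint 3 i = ?p ?v"
      using Gp_edge_2_3 Gp_edge_endpoints[OF i] Gp_edge_sym by simp
    moreover have "?v \<in> ?Q"
      using endpoint_in_inner_layer[OF i, of 2] deg12_endpoint_less_2[OF i, of 2] by simp
    moreover have "i \<in> steps_at xs ?v" "i \<in> steps_at xs (endpoint 3 i)"
      using endpoint_in_steps_at[OF layer_steps_less_length[OF i]] by auto
    ultimately show "i \<in> (\<Union>v\<in>?Q. steps_at xs v \<inter> steps_at xs (?p v))"
      by (intro UN_I[of ?v]) simp_all
  qed
  then have "card (layer_steps 2) \<le> card (\<Union>v\<in>?Q. steps_at xs v \<inter> steps_at xs (?p v))"
    by (intro card_mono) auto
  also have "\<dots> \<le> card ?Q"
    by (rule card_steps_to_partners_le[OF distinct_xs three_le_length_xs]) auto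
  finally show ?thesis .
qed

lemma repeated_values_endpoint:
  assumes "j \<in> {1, 2}"
  shows "repeated_values (endpoint j) (layer_steps 1) \<subseteq> {v \<in> {j} \<times> {1..n}. 2 \<le> deg12 v}"
proof
  fix v assume "v \<in> repeated_values (endpoint j) (layer_steps 1)"
  then have v: "2 \<le> card {i \<in> layer_steps 1. endpoint j i = v}"
    by (simp add: repeated_values_def)
  then have "{i \<in> layer_steps 1. endpoint j i = v} \<noteq> {}" by (metis card.empty not_numeral_le_zero)
  then obtain i where i: "i \<in> layer_steps 1" "endpoint j i = v" by blast
  have j: "j \<in> {1, Suc 1}" using assms by (auto simp: numeral_2_eq_2)
  have "fst v = j" using fst_endpoint[OF i(1) j] i(2) by simp
  then have "{i \<in> layer_steps 1. endpoint j i = v} = layer_steps 1 \<inter> steps_at xs v"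
    using endpoint_eq_iff[OF _ j] by blast
  moreover have "v \<in> {j} \<times> {1..n}"
    using endpoint_in_inner_layer[OF i(1) j] i(2) assms by auto
  ultimately show "v \<in> {v \<in> {j} \<times> {1..n}. 2 \<le> deg12 v}"
    using v by (simp add: deg12_def)
qed

lemma card_layer_steps_1:
  "card (layer_steps 1) \<le> max_matching n E
     + card {v \<in> {1} \<times> {1..n}. 2 \<le> deg12 v} + card {v \<in> {2} \<times> {1..n}. 2 \<le> deg12 v}"
proof -
  let ?B = "layer_steps 1"
  have fibre_le_2: "card {i \<in> ?B. endpoint j i = v} \<le> 2" for j v
  proof -
    have "{i \<in> ?B. endpoint j i = v} \<subseteq> steps_at xs v"
      using endpoint_in_steps_at layer_steps_less_length by blast
    then have "card {i \<in> ?B. endpoint j i = v} \<le> card (steps_at xs v)"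
      by (rule card_mono[OF finite_steps_at])
    then show ?thesis using card_steps_at_le[OF distinct_xs, of v] by linarith
  qed
  obtain M where M: "M \<subseteq> ?B" "inj_on (endpoint 1) M" "inj_on (endpoint 2) M"
    "card ?B \<le> card M + card (repeated_values (endpoint 1) ?B) + card (repeated_values (endpoint 2) ?B)"
    using degree_le_2_matching[OF finite_layer_steps fibre_le_2 fibre_le_2] by blast
  have fst_endpoint_M: "fst (endpoint 1 i) = 1" "fst (endpoint 2 i) = 2" if "i \<in> M" for i
    using fst_endpoint[of i 1] that M(1) by auto
  have inj_snd: "inj_on (\<lambda>i. snd (endpoint j i)) M" if "j \<in> {1, 2}" for j
  proof (rule inj_onI)
    fix i i' assume "i \<in> M" "i' \<in> M" "snd (endpoint j i) = snd (endpoint j i')"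
    then have "endpoint j i = endpoint j i'"
      using fst_endpoint_M that by (auto simp: prod_eq_iff)
    then show "i = i'" using M(2,3) that \<open>i \<in> M\<close> \<open>i' \<in> M\<close> by (auto dest: inj_onD)
  qed
  moreover have "snd (endpoint 1 i) \<in> {1..n} \<and> snd (endpoint 2 i) \<in> {1..n} \<and>
      E (snd (endpoint 1 i)) (snd (endpoint 2 i))" if "i \<in> M" for i
  proof -
    have i: "i \<in> ?B" using that M(1) by blast
    have "endpoint 1 i \<in> {1} \<times> {1..n}" "endpoint 2 i \<in> {2} \<times> {1..n}"
      using endpoint_in_inner_layer[OF i, of 1] endpoint_in_inner_layer[OF i, of 2] by simp_all
    moreover have "Gp_edge n E (endpoint 1 i) (endpoint 2 i)"
      using Gp_edge_endpoints[OF i] by (simp add: Gp_edge_sym numeral_2_eq_2)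
    then have "E (snd (endpoint 1 i)) (snd (endpoint 2 i))"
      by (rule Gp_edge_1_2) (use fst_endpoint_M[OF that] in simp_all)
    ultimately show ?thesis by auto
  qed
  ultimately have "bip_matching n E ((\<lambda>i. (snd (endpoint 1 i), snd (endpoint 2 i))) ` M)"
    by (intro bip_matching_imageI) auto
  then have "card ((\<lambda>i. (snd (endpoint 1 i), snd (endpoint 2 i))) ` M) \<le> max_matching n E"
    by (rule card_le_max_matching)
  moreover have "inj_on (\<lambda>i. (snd (endpoint 1 i), snd (endpoint 2 i))) M"
    using inj_snd[of 1] by (auto simp: inj_on_def)
  ultimately have "card M \<le> max_matching n E" by (simp add: card_image)
  moreover have repeated: "card (repeated_values (endpoint j) ?B) \<le> card {v \<in> {j} \<times> {1..n}. 2 \<le> deg12 v}"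
    if "j \<in> {1, 2}" for j
    using repeated_values_endpoint[OF that] by (intro card_mono) auto
  ultimately show ?thesis using M(4) repeated[OF insertI1] repeated[OF insertI2[OF singletonI]] by linarith
qed

lemma card_edge_steps: "card edge_steps \<le> 3 * n + max_matching n E"
proof -
  let ?L = layer_steps
  have "card edge_steps \<le> card (?L 0 \<union> ?L 1 \<union> ?L 2 \<union> ?L 3)"
    using edge_steps_subset by (intro card_mono) (simp_all add: finite_layer_steps)
  also have "\<dots> \<le> card (?L 0) + card (?L 1) + card (?L 2) + card (?L 3)"
    using card_Un_le[of "?L 0 \<union> ?L 1 \<union> ?L 2" "?L 3"] card_Un_le[of "?L 0 \<union> ?L 1" "?L 2"]
      card_Un_le[of "?L 0" "?L 1"] by linarith
  finally have "card edge_steps \<le> card (?L 0) + card (?L 1) + card (?L 2) + card (?L 3)" .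
  moreover have split: "card {v \<in> {j} \<times> {1..n}. 2 \<le> deg12 v} + card {v \<in> {j} \<times> {1..n}. deg12 v < 2} = n"
    for j :: nat
    using card_filter_add_card_filter_not[of "{j} \<times> {1..n}" "\<lambda>v. 2 \<le> deg12 v"] by (simp add: not_le)
  ultimately show ?thesis
    using card_layer_steps_0 card_layer_steps_1 card_layer_steps_2 card_layer_steps_3 split[of 1] split[of 2]
    by linarith
qed

lemma tour_cost_ge_max_matching: "5 * n - max_matching n E \<le> tour_cost (Gp_edge n E) xs"
  using tour_cost_add_card_edge_steps[of "Gp_edge n E" xs] card_edge_steps length_xs
  unfolding edge_steps_def by linarith

end

section \<open>Upper bound\<close>

locale matching_tour =
  fixes n :: nat and E :: "nat \<Rightarrow> nat \<Rightarrow> bool" and M :: "(nat \<times> nat) set" and \<sigma> :: "nat \<Rightarrow> nat"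
  assumes even_n: "even n" and matching: "bip_matching n E M"
    and \<sigma>_range: "\<sigma> ` {1..n} \<subseteq> {1..n}" and \<sigma>_inj: "inj_on \<sigma> {1..n}"
    and \<sigma>_matching: "\<And>a b. (a, b) \<in> M \<Longrightarrow> \<sigma> a = b"
begin

definition even_vertex :: "nat \<Rightarrow> nat" where
  "even_vertex i = 2 * i + 2"

text \<open>The odd neighbour \<open>2 j - 1\<close> of the next vertex \<open>v\<^sup>0\<^sub>j\<close>, \<open>j = (i + 1) mod (n/2) + 1\<close>.\<close>
definition odd_vertex :: "nat \<Rightarrow> nat" where
  "odd_vertex i = (2 * i + 2) mod n + 1"

definition block :: "nat \<Rightarrow> (nat \<times> nat) list" where
  "block i = [(0, i + 1), (1, even_vertex i), (2, \<sigma> (even_vertex i)), (3, \<sigma> (even_vertex i)),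
     (4, i + 1), (3, \<sigma> (odd_vertex i)), (2, \<sigma> (odd_vertex i)), (1, odd_vertex i)]"

definition vertex :: "nat \<Rightarrow> nat \<times> nat" where
  "vertex k = block (k div 8) ! (k mod 8)"

definition tsp_tour :: "(nat \<times> nat) list" where
  "tsp_tour = map vertex [0..<4 * n]"

lemma less_8_cases: "(r::nat) < 8 \<Longrightarrow> r = 0 \<or> r = 1 \<or> r = 2 \<or> r = 3 \<or> r = 4 \<or> r = 5 \<or> r = 6 \<or> r = 7"
  by auto

lemma vertex_block: "r < 8 \<Longrightarrow> vertex (8 * i + r) = block i ! r"
  by (simp add: vertex_def)

lemma odd_vertex_eq: "odd_vertex i = 2 * ((i + 1) mod (n div 2)) + 1"
  using even_n by (auto simp: odd_vertex_def mult_mod_right elim!: evenE)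

lemma even_vertex_range: "i < n div 2 \<Longrightarrow> even_vertex i \<in> {1..n}"
  by (simp add: even_vertex_def)

lemma odd_vertex_range:
  assumes "i < n div 2"
  shows "odd_vertex i \<in> {1..n}"
proof -
  have "(i + 1) mod (n div 2) < n div 2" using assms by simp
  then show ?thesis using even_n by (auto simp: odd_vertex_eq elim!: evenE)
qed

lemma even_vertex_neq_odd_vertex: "even_vertex i \<noteq> odd_vertex i'"
proof -
  have "2 * a + 2 \<noteq> 2 * b + (1::nat)" for a b by presburger
  then show ?thesis unfolding even_vertex_def odd_vertex_eq by blast
qed

lemma odd_vertex_inj: "i < n div 2 \<Longrightarrow> i' < n div 2 \<Longrightarrow> odd_vertex i = odd_vertex i' \<Longrightarrow> i = i'"
  by (simp add: odd_vertex_eq Suc_mod_inj)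

lemma matched_edge: "a \<in> Domain M \<Longrightarrow> E a (\<sigma> a)"
  using \<sigma>_matching bip_matching_edge[OF matching] by auto

lemma vertex_block_in_Gp_verts:
  assumes "i < n div 2" "r < 8"
  shows "vertex (8 * i + r) \<in> Gp_verts n"
proof -
  have "\<sigma> (even_vertex i) \<in> {1..n}" "\<sigma> (odd_vertex i) \<in> {1..n}"
    using even_vertex_range odd_vertex_range \<sigma>_range assms(1) by blast+
  moreover have "i + 1 \<in> {1..n div 2}" using assms(1) by simp
  ultimately show ?thesis
    using less_8_cases[OF assms(2)] even_vertex_range[OF assms(1)] odd_vertex_range[OF assms(1)]
    unfolding vertex_block[OF assms(2)] block_def Gp_verts_def by (elim disjE) simp_all
qed

lemma vertex_block_inj:
  assumes "i < n div 2" "r < 8" "i' < n div 2" "r' < 8" "vertex (8 * i + r) = vertex (8 * i' + r')"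
  shows "i = i' \<and> r = r'"
proof -
  have "even_vertex i = even_vertex i' \<longleftrightarrow> i = i'" by (auto simp: even_vertex_def)
  moreover have "odd_vertex i = odd_vertex i' \<longleftrightarrow> i = i'"
    using odd_vertex_inj assms(1,3) by blast
  moreover have "\<sigma> x = \<sigma> y \<longleftrightarrow> x = y" if "x \<in> {1..n}" "y \<in> {1..n}" for x y
    using \<sigma>_inj that by (auto dest: inj_onD)
  ultimately have
    "\<sigma> (even_vertex i) = \<sigma> (even_vertex i') \<longleftrightarrow> i = i'"
    "\<sigma> (odd_vertex i) = \<sigma> (odd_vertex i') \<longleftrightarrow> i = i'"
    "\<sigma> (even_vertex i) \<noteq> \<sigma> (odd_vertex i')" "\<sigma> (odd_vertex i) \<noteq> \<sigma> (even_vertex i')"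
    using assms(1,3) even_vertex_range odd_vertex_range even_vertex_neq_odd_vertex by metis+
  with assms(5) show ?thesis
    using less_8_cases[OF assms(2)] less_8_cases[OF assms(4)] even_vertex_neq_odd_vertex
      even_vertex_neq_odd_vertex[symmetric]
    unfolding vertex_block[OF assms(2)] vertex_block[OF assms(4)] block_def
    by (elim disjE) simp_all
qed

lemma vertex_step_edge:
  assumes "i < n div 2" "r < 8"
    and "r = 1 \<Longrightarrow> even_vertex i \<in> Domain M" and "r = 6 \<Longrightarrow> odd_vertex i \<in> Domain M"
  shows "Gp_edge n E (vertex (8 * i + r)) (vertex ((8 * i + r + 1) mod (4 * n)))"
proof (cases "r = 7")
  case True
  let ?j = "(i + 1) mod (n div 2)"
  have "4 * n = 8 * (n div 2)" using even_n by simp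
  then have "(8 * i + r + 1) mod (4 * n) = 8 * ?j + 0"
    using True by (simp only:) (simp add: mult_mod_right)
  moreover have "?j < n div 2" using assms(1) by simp
  ultimately show ?thesis
    using True unfolding vertex_block[OF assms(2)] block_def odd_vertex_eq
    by (simp add: Gp_edge_def vertex_def block_def)
next
  case False
  then have next_pos: "(8 * i + r + 1) mod (4 * n) = 8 * i + (r + 1)" and "r + 1 < 8"
    using assms(1,2) even_n by (auto elim!: evenE)
  have "\<sigma> (even_vertex i) \<in> {1..n}" "\<sigma> (odd_vertex i) \<in> {1..n}"
    using even_vertex_range odd_vertex_range \<sigma>_range assms(1) by blast+
  moreover have "r = 1 \<Longrightarrow> E (even_vertex i) (\<sigma> (even_vertex i))"
    "r = 6 \<Longrightarrow> E (odd_vertex i) (\<sigma> (odd_vertex i))"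
    using assms(3,4) matched_edge by blast+
  ultimately show ?thesis
    using False less_8_cases[OF assms(2)] assms(1) even_vertex_range[OF assms(1)]
      odd_vertex_range[OF assms(1)]
    unfolding next_pos vertex_block[OF assms(2)] vertex_block[OF \<open>r + 1 < 8\<close>] block_def
    by (elim disjE) (simp_all add: Gp_edge_def even_vertex_def)
qed

lemma position_decomp:
  assumes "k < 4 * n"
  shows "k div 8 < n div 2" "k mod 8 < 8" "k = 8 * (k div 8) + k mod 8"
  using assms even_n by (auto elim!: evenE)

lemma vertex_in_Gp_verts: "k < 4 * n \<Longrightarrow> vertex k \<in> Gp_verts n"
  using vertex_block_in_Gp_verts[OF position_decomp(1,2), of k k] by (simp only: mult_div_mod_eq)

lemma inj_on_vertex: "inj_on vertex {..<4 * n}"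
proof (rule inj_onI)
  fix k k' assume "k \<in> {..<4 * n}" "k' \<in> {..<4 * n}" "vertex k = vertex k'"
  then have "k div 8 = k' div 8 \<and> k mod 8 = k' mod 8"
    using vertex_block_inj position_decomp by (metis lessThan_iff)
  then show "k = k'" by (metis div_mod_decomp)
qed

lemma is_tour_tsp_tour: "is_tour (Gp_verts n) tsp_tour"
proof -
  have "distinct tsp_tour"
    using inj_on_vertex by (simp add: tsp_tour_def distinct_map atLeast0LessThan)
  moreover have "set tsp_tour \<subseteq> Gp_verts n"
    using vertex_in_Gp_verts by (auto simp: tsp_tour_def)
  moreover have "card (set tsp_tour) = card (Gp_verts n)"
    using distinct_card[OF \<open>distinct tsp_tour\<close>] card_Gp_verts[OF even_n] by (simp add: tsp_tour_def)
  ultimately show ?thesis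
    unfolding is_tour_def using card_subset_eq[of "Gp_verts n"] by (simp add: Gp_verts_def)
qed

text \<open>The only steps of the tour that may cost 2: those between \<open>V\<^sub>1\<close> and \<open>V\<^sub>2\<close> at an unmatched vertex.\<close>
definition defects :: "nat set" where
  "defects = {k. k < 4 * n \<and> (k mod 8 = 1 \<and> snd (vertex k) \<notin> Domain M \<or>
                                k mod 8 = 6 \<and> snd (vertex (Suc k)) \<notin> Domain M)}"

lemma tsp_tour_step_edge:
  assumes "k < 4 * n" "k \<notin> defects"
  shows "Gp_edge n E (tsp_tour ! k) (tour_succ tsp_tour k)"
proof -
  note k = position_decomp[OF assms(1)]
  have "k mod 8 = 1 \<Longrightarrow> even_vertex (k div 8) \<in> Domain M"
    using assms vertex_block[OF k(2), of "k div 8"] k(3) by (auto simp: defects_def block_def)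
  moreover have "k mod 8 = 6 \<Longrightarrow> odd_vertex (k div 8) \<in> Domain M"
  proof -
    assume "k mod 8 = 6"
    then have "Suc k = 8 * (k div 8) + 7" using k(3) by linarith
    then have "vertex (Suc k) = (1, odd_vertex (k div 8))"
      by (simp only: vertex_block) (simp add: block_def)
    then show ?thesis using assms \<open>k mod 8 = 6\<close> by (auto simp: defects_def)
  qed
  ultimately have "Gp_edge n E (vertex (8 * (k div 8) + k mod 8)) (vertex ((8 * (k div 8) + k mod 8 + 1) mod (4 * n)))"
    by (rule vertex_step_edge[OF k(1,2)])
  moreover have "(k + 1) mod (4 * n) < 4 * n" using assms(1) by simp
  ultimately show ?thesis using assms(1) by (simp add: tsp_tour_def tour_succ_def)
qed

lemma card_defects: "card defects \<le> n - card M"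
proof -
  define a where "a k = (if k mod 8 = 1 then k else Suc k)" for k
  define f where "f k = vertex (a k)" for k
  have a: "a k < 4 * n \<and> a k mod 8 = (if k mod 8 = 1 then 1 else 7)" if "k \<in> defects" for k
  proof -
    have k: "k < 4 * n" "k mod 8 = 1 \<or> k mod 8 = 6" using that by (auto simp: defects_def)
    show ?thesis
    proof (cases "k mod 8 = 1")
      case False
      then have "k mod 8 = 6" using k(2) by simp
      moreover from this have "Suc k < 4 * n" using k(1) even_n by (elim evenE) presburger
      ultimately show ?thesis by (simp add: a_def mod_Suc)
    qed (simp add: a_def k(1))
  qed
  have "inj_on a defects"
  proof (rule inj_onI)
    fix k k' assume k: "k \<in> defects" "k' \<in> defects" and eq: "a k = a k'"
    have "(if k mod 8 = 1 then 1 else 7) = (if k' mod 8 = 1 then 1 else (7::nat))"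
      using a[OF k(1)] a[OF k(2)] eq by metis
    then have "k mod 8 = 1 \<longleftrightarrow> k' mod 8 = 1"
      by (cases "k mod 8 = 1"; cases "k' mod 8 = 1") simp_all
    then show "k = k'" using eq unfolding a_def by (cases "k mod 8 = 1") simp_all
  qed
  moreover have "a ` defects \<subseteq> {..<4 * n}" using a by auto
  then have "inj_on vertex (a ` defects)" by (rule inj_on_subset[OF inj_on_vertex])
  ultimately have "inj_on f defects"
    unfolding f_def using comp_inj_on[of a defects vertex] by (simp add: comp_def)
  moreover have "f ` defects \<subseteq> {1} \<times> ({1..n} - Domain M)"
  proof
    fix v assume "v \<in> f ` defects"
    then obtain k where k: "k \<in> defects" "v = f k" by blast
    have "a k mod 8 = 1 \<or> a k mod 8 = 7" using a[OF k(1)] by (cases "k mod 8 = 1") simp_all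
    then have "fst v = 1" unfolding k(2) f_def vertex_def block_def by auto
    moreover have "v \<in> Gp_verts n" using vertex_in_Gp_verts a[OF k(1)] by (simp add: k(2) f_def)
    ultimately have "v \<in> {1} \<times> {1..n}" using Gp_verts_inner_layer by fastforce
    moreover have "snd v \<notin> Domain M" using k by (auto simp: defects_def f_def a_def)
    ultimately show "v \<in> {1} \<times> ({1..n} - Domain M)" by auto
  qed
  ultimately have "card defects \<le> card ({1::nat} \<times> ({1..n} - Domain M))"
    by (intro card_inj_on_le) auto
  also have "\<dots> = card ({1..n} - Domain M)" by (simp add: card_cartesian_product)
  also have "\<dots> = n - card M"
  proof -
    have "Domain M \<subseteq> {1..n}" using bip_matching_subset[OF matching] by auto
    then show ?thesis
      using card_Diff_subset[of "Domain M" "{1..n}"] card_Domain_bip_matching[OF matching]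
      by (simp add: finite_subset)
  qed
  finally show ?thesis .
qed

lemma tour_cost_tsp_tour: "tour_cost (Gp_edge n E) tsp_tour \<le> 5 * n - card M"
proof -
  have "tour_cost (Gp_edge n E) tsp_tour \<le> length tsp_tour + card defects"
    using tsp_tour_step_edge by (intro tour_cost_le_length_add_card) (auto simp: tsp_tour_def defects_def)
  moreover have "card M \<le> n"
    using card_mono[of "{1..n}" "Domain M"] bip_matching_subset[OF matching]
      card_Domain_bip_matching[OF matching] by fastforce
  ultimately show ?thesis using card_defects by (simp add: tsp_tour_def)
qed

end

theorem Gp_tour_cost_le_matching:
  assumes "even n" "bip_matching n E M"
  shows "\<exists>xs. is_tour (Gp_verts n) xs \<and> tour_cost (Gp_edge n E) xs \<le> 5 * n - card M"
proof -
  obtain \<sigma> where "\<sigma> ` {1..n} \<subseteq> {1..n}" "inj_on \<sigma> {1..n}" "\<And>a b. (a, b) \<in> M \<Longrightarrow> \<sigma> a = b"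
    using bip_matching_extends_to_injection[OF assms(2)] by blast
  then interpret matching_tour n E M \<sigma>
    using assms by unfold_locales
  show ?thesis using is_tour_tsp_tour tour_cost_tsp_tour by blast
qed

theorem Gp_tour_cost_ge_max_matching:
  assumes "even n" "is_tour (Gp_verts n) xs"
  shows "5 * n - max_matching n E \<le> tour_cost (Gp_edge n E) xs"
proof (cases "n = 0")
  case False
  then interpret Gp_tour n E xs
    using assms by unfold_locales
  show ?thesis by (rule tour_cost_ge_max_matching)
qed simp

theorem mainTheorem19:
  fixes n :: nat and E :: "nat \<Rightarrow> nat \<Rightarrow> bool"
  assumes "even n"
  shows "(\<forall>M. bip_matching n E M \<longrightarrow>
            (\<exists>xs. is_tour (Gp_verts n) xs \<and> tour_cost (Gp_edge n E) xs \<le> 5 * n - card M))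
       \<and> (\<forall>xs. is_tour (Gp_verts n) xs \<longrightarrow> tour_cost (Gp_edge n E) xs \<ge> 5 * n - max_matching n E)
       \<and> card (Gp_verts n) = 4 * n
       \<and> opt_tsp (Gp_verts n) (Gp_edge n E) = 5 * n - max_matching n E"
proof -
  obtain M where "bip_matching n E M" "card M = max_matching n E"
    using max_matching_attained by blast
  then obtain xs where "is_tour (Gp_verts n) xs" "tour_cost (Gp_edge n E) xs \<le> 5 * n - max_matching n E"
    using Gp_tour_cost_le_matching[OF assms] by metis
  then have "opt_tsp (Gp_verts n) (Gp_edge n E) = 5 * n - max_matching n E"
    using Gp_tour_cost_ge_max_matching[OF assms] by (intro opt_tsp_eqI)
  then show ?thesis
    using Gp_tour_cost_le_matching[OF assms] Gp_tour_cost_ge_max_matching[OF assms] card_Gp_verts[OF assms] by blast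
qed

end
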